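(* The ordinal space $X = [0,\omega_1)$ with the order topology is set strongly star Hurewicz, while its subspace $Y = \{\alpha + 1 : \alpha < \omega_1 \text{ is a limit ordinal}\}$ is not set strongly star Hurewicz.
   Context: For a subset $S$ of a space $X$ and a collection $\mathcal{U}$ of subsets of $X$, ${\rm St}(S,\mathcal{U}) = \bigcup\{U \in \mathcal{U}: U \cap S \neq \emptyset\}$. A space $X$ is set strongly star Hurewicz if for each nonempty $S \subset X$ and each sequence $(\mathcal{U}_n: n\in\mathbb{N})$ of collections of sets open in $X$ with $\overline{S} \subset \bigcup\mathcal{U}_n$ for all $n$, there are finite sets $F_n \subset \overline{S}$ such that each $x \in S$ lies in ${\rm St}(F_n,\mathcal{U}_n)$ for all but finitely many $n$. *)

theory Defs
  imports "HOL-Analysis.Analysis"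
begin

definition St :: "'a set \<Rightarrow> 'a set set \<Rightarrow> 'a set" where
  "St S \<U> = \<Union>{U \<in> \<U>. U \<inter> S \<noteq> {}}"

definition set_strongly_star_Hurewicz :: "'a topology \<Rightarrow> bool" where
  "set_strongly_star_Hurewicz T \<longleftrightarrow>
     (\<forall>S. S \<noteq> {} \<and> S \<subseteq> topspace T \<longrightarrow>
       (\<forall>\<U> :: nat \<Rightarrow> 'a set set.
          (\<forall>n. (\<forall>U\<in>\<U> n. openin T U) \<and> T closure_of S \<subseteq> \<Union>(\<U> n)) \<longrightarrow>
          (\<exists>F :: nat \<Rightarrow> 'a set.
             (\<forall>n. finite (F n) \<and> F n \<subseteq> T closure_of S) \<and>
             (\<forall>x\<in>S. \<forall>\<^sub>F n in sequentially. x \<in> St (F n) (\<U> n)))))"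

definition order_top :: "('a::linorder) topology" where
  "order_top = topology_generated_by (range lessThan \<union> range greaterThan)"

text \<open>A well-ordered type is a model of the ordinal omega_1 = [0, omega_1)
  iff it is uncountable and every proper initial segment is countable.\<close>
definition is_omega1 :: "('a::wellorder) itself \<Rightarrow> bool" where
  "is_omega1 _ \<longleftrightarrow> uncountable (UNIV :: 'a set) \<and> (\<forall>x::'a. countable {..<x})"

definition osucc :: "'a::wellorder \<Rightarrow> 'a" where
  "osucc a = (LEAST b. a < b)"

definition is_limit :: "'a::wellorder \<Rightarrow> bool" where
  "is_limit a \<longleftrightarrow> (\<exists>b. b < a) \<and> (\<forall>b. a \<noteq> osucc b)"

end

theory Submission
  imports Defs
begin

text \<open>
  Closed subsets of \<open>[0,\<omega>\<^sub>1)\<close> are countably compact: a strictly increasing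
  sequence converges to its supremum, which lies below \<open>\<omega>\<^sub>1\<close> because countable
  sets are bounded. Hence for every open cover of a closed set \<open>C\<close> there is no infinite
  sequence in \<open>C\<close> whose terms pairwise avoid sharing a cover member, and a greedy choice
  yields a finite \<open>F \<subseteq> C\<close> whose star covers \<open>C\<close>. Applying this to \<open>C = closure S\<close>
  for every \<open>n\<close> gives the Hurewicz property for \<open>X\<close>.

  The points \<open>\<alpha> + 1\<close> are isolated, so \<open>Y\<close> is discrete; it is uncountable since the
  limit ordinals are unbounded. For the cover of \<open>Y\<close> by singletons the stars of finite sets
  are those sets themselves, so only countably many points of \<open>Y\<close> can be caught.
\<close>

lemma omega1_countable_bounded:
  assumes "is_omega1 TYPE('a::wellorder)" and "countable (A::'a set)"
  shows "\<exists>b. \<forall>a\<in>A. a < b"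
proof -
  have "countable {..a}" for a :: 'a
  proof -
    have "{..a} = insert a {..<a}"
      by auto
    then show ?thesis
      using assms(1) unfolding is_omega1_def by simp
  qed
  then have "countable (\<Union>a\<in>A. {..a})"
    using assms(2) by blast
  then have "(\<Union>a\<in>A. {..a}) \<noteq> UNIV"
    using assms(1) unfolding is_omega1_def by metis
  then obtain b where "b \<notin> (\<Union>a\<in>A. {..a})"
    by blast
  then show ?thesis
    by (auto simp: not_le)
qed

lemma omega1_gt_ex:
  assumes "is_omega1 TYPE('a::wellorder)"
  shows "\<exists>b. (a::'a) < b"
  using omega1_countable_bounded[OF assms, of "{a}"] by auto

lemma less_osucc: "(a::'a::wellorder) < b \<Longrightarrow> a < osucc a"
  unfolding osucc_def by (rule LeastI)

lemma omega1_less_osucc: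
  assumes "is_omega1 TYPE('a::wellorder)"
  shows "(a::'a) < osucc a"
  using omega1_gt_ex[OF assms] less_osucc by blast

lemma osucc_least: "(a::'a::wellorder) < b \<Longrightarrow> osucc a \<le> b"
  unfolding osucc_def by (rule Least_le)

lemma wellorder_inj_seq_strict_mono_subseq:
  fixes x :: "nat \<Rightarrow> 'a::wellorder"
  assumes "inj x"
  obtains f :: "nat \<Rightarrow> nat" where "strict_mono f" "strict_mono (x \<circ> f)"
proof -
  obtain f where f: "strict_mono f" "monoseq (x \<circ> f)"
    using seq_monosub[of x] by (auto simp: o_def)
  have inj: "inj (x \<circ> f)"
    using assms strict_mono_imp_inj_on[OF f(1)] by (simp add: inj_compose)
  have "\<not> (\<forall>m n. m \<le> n \<longrightarrow> (x \<circ> f) n \<le> (x \<circ> f) m)"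
  proof
    assume "\<forall>m n. m \<le> n \<longrightarrow> (x \<circ> f) n \<le> (x \<circ> f) m"
    moreover have "(x \<circ> f) (Suc i) \<noteq> (x \<circ> f) i" for i
      using inj by (metis injD n_not_Suc_n)
    ultimately have "((x \<circ> f) (Suc i), (x \<circ> f) i) \<in> {(a, b). a < b}" for i
      by (simp add: order_less_le)
    then show False
      using wf wf_iff_no_infinite_down_chain by blast
  qed
  then have "mono (x \<circ> f)"
    using f(2) unfolding monoseq_def mono_def by blast
  with inj have "strict_mono (x \<circ> f)"
    by (simp add: strict_mono_iff_mono)
  then show thesis
    by (rule that[OF f(1)])
qed

lemma omega1_strict_mono_seq_sup:
  fixes y :: "nat \<Rightarrow> 'a::wellorder"
  assumes "is_omega1 TYPE('a)" and "strict_mono y"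
  obtains p where "\<And>k. y k < p" and "\<And>a. a < p \<Longrightarrow> \<exists>k. a < y k"
proof
  obtain b where "\<forall>k. y k < b"
    using omega1_countable_bounded[OF assms(1), of "range y"] by auto
  then show "y k < (LEAST z. \<forall>k. y k < z)" for k
    using LeastI[of "\<lambda>z. \<forall>k. y k < z" b] by blast
  show "\<exists>k. a < y k" if a: "a < (LEAST z. \<forall>k. y k < z)" for a
  proof -
    obtain k where "a \<le> y k"
      using not_less_Least[OF a] by (auto simp: not_less)
    then show ?thesis
      using strict_monoD[OF assms(2), of k "Suc k"] by (auto intro: le_less_trans)
  qed
qed

lemma omega1_limit_above:
  assumes "is_omega1 TYPE('a::wellorder)"
  shows "\<exists>l. is_limit l \<and> (b::'a) < l"
proof -
  define g where "g n = (osucc ^^ Suc n) b" for n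
  have g_Suc: "g (Suc n) = osucc (g n)" for n
    by (simp add: g_def)
  have "strict_mono g"
    unfolding strict_mono_Suc_iff g_Suc using omega1_less_osucc[OF assms] by blast
  then obtain l where above: "\<And>n. g n < l" and approx: "\<And>a. a < l \<Longrightarrow> \<exists>n. a < g n"
    using omega1_strict_mono_seq_sup[OF assms] by blast
  have "b < l"
    using omega1_less_osucc[OF assms, of b] above[of 0] by (simp add: g_def)
  moreover have "l \<noteq> osucc c" for c
  proof
    assume l: "l = osucc c"
    then obtain n where "c < g n"
      using approx omega1_less_osucc[OF assms] by blast
    then have "l \<le> g n"
      unfolding l by (rule osucc_least)
    then show False
      using above[of n] by simp
  qed
  ultimately show ?thesis
    unfolding is_limit_def by blast
qed

lemma topspace_order_top:
  assumes "\<And>x::'a::linorder. \<exists>y. y \<noteq> x"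
  shows "topspace (order_top :: 'a topology) = UNIV"
proof -
  have "x \<in> \<Union>(range lessThan \<union> range greaterThan)" for x :: 'a
  proof -
    obtain y where "y < x \<or> x < y"
      using assms[of x] neq_iff by blast
    then show ?thesis
      by blast
  qed
  then have "\<Union>(range lessThan \<union> range greaterThan) = (UNIV::'a set)"
    by blast
  then show ?thesis
    unfolding order_top_def by (simp only: topology_generated_by_topspace)
qed

lemma omega1_topspace_order_top:
  assumes "is_omega1 TYPE('a::wellorder)"
  shows "topspace (order_top :: 'a topology) = UNIV"
  using omega1_gt_ex[OF assms] by (intro topspace_order_top) (metis less_irrefl)

lemma openin_order_top_lessThan: "openin order_top {..<(b::'a::linorder)}"
  unfolding order_top_def by (rule topology_generated_by_Basis) auto

lemma openin_order_top_greaterThan: "openin order_top {(b::'a::linorder)<..}"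
  unfolding order_top_def by (rule topology_generated_by_Basis) auto

lemma openin_order_top_left_nbhd:
  assumes "openin (order_top::'a::linorder topology) W" and "p \<in> W" and "a0 < p"
  shows "\<exists>a<p. {a<..p} \<subseteq> W"
proof -
  have "generate_topology_on (range lessThan \<union> range greaterThan) W"
    using assms(1) unfolding order_top_def by (rule openin_topology_generated_by)
  then have "\<forall>p::'a. p \<in> W \<and> (\<exists>a0. a0 < p) \<longrightarrow> (\<exists>a<p. {a<..p} \<subseteq> W)"
  proof (induction rule: generate_topology_on.induct)
    case Empty
    then show ?case by auto
  next
    case (Int U V)
    show ?case
    proof (intro allI impI)
      fix p :: 'a
      assume "p \<in> U \<inter> V \<and> (\<exists>a0. a0 < p)"
      then obtain a b where "a < p" "{a<..p} \<subseteq> U" "b < p" "{b<..p} \<subseteq> V"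
        using Int.IH by blast
      then show "\<exists>c<p. {c<..p} \<subseteq> U \<inter> V"
        by (intro exI[of _ "max a b"]) auto
    qed
  next
    case (UN K)
    then show ?case
      by (metis UnionE Union_upper subset_trans)
  next
    case (Basis s)
    then show ?case
      by (auto simp: subset_iff)
  qed
  with assms(2,3) show ?thesis
    by blast
qed

lemma limitin_order_top_sup:
  fixes y :: "nat \<Rightarrow> 'a::linorder"
  assumes "p \<in> topspace order_top" and "mono y"
    and above: "\<And>k. y k < p" and approx: "\<And>a. a < p \<Longrightarrow> \<exists>k. a < y k"
  shows "limitin order_top y p sequentially"
  unfolding limitin_def
proof (intro conjI allI impI)
  fix W
  assume "openin order_top W \<and> p \<in> W"
  then obtain a where "a < p" and W: "{a<..p} \<subseteq> W"
    using openin_order_top_left_nbhd above by blast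
  then obtain k where "a < y k"
    using approx by blast
  then have "y n \<in> W" if "k \<le> n" for n
    using monoD[OF assms(2) that] above[of n] W by fastforce
  then show "\<forall>\<^sub>F n in sequentially. y n \<in> W"
    by (auto simp: eventually_sequentially)
qed (fact assms(1))

lemma omega1_closed_inj_seq_convergent_subseq:
  fixes x :: "nat \<Rightarrow> 'a::wellorder"
  assumes om: "is_omega1 TYPE('a)" and C: "closedin order_top C"
    and "inj x" and x: "\<And>k. x k \<in> C"
  obtains f :: "nat \<Rightarrow> nat" and p where "strict_mono f" "p \<in> C"
    "limitin order_top (x \<circ> f) p sequentially"
proof -
  obtain f :: "nat \<Rightarrow> nat" where f: "strict_mono f" and y: "strict_mono (x \<circ> f)"
    using wellorder_inj_seq_strict_mono_subseq[OF \<open>inj x\<close>] by blast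
  obtain p where "\<And>k. (x \<circ> f) k < p" "\<And>a. a < p \<Longrightarrow> \<exists>k. a < (x \<circ> f) k"
    using omega1_strict_mono_seq_sup[OF om y] by blast
  then have lim: "limitin order_top (x \<circ> f) p sequentially"
    using y by (intro limitin_order_top_sup) (auto simp: omega1_topspace_order_top[OF om] strict_mono_mono)
  moreover have "p \<in> C"
    using limitin_closedin[OF lim C] x by simp
  ultimately show thesis
    using f that by blast
qed

lemma omega1_closed_seq_shares_cover:
  fixes x :: "nat \<Rightarrow> 'a::wellorder"
  assumes om: "is_omega1 TYPE('a)"
    and C: "closedin order_top C" and \<V>: "\<forall>V\<in>\<V>. openin order_top V" "C \<subseteq> \<Union>\<V>"
    and x: "\<And>k. x k \<in> C"
  shows "\<exists>i j. i < j \<and> (\<exists>V\<in>\<V>. x i \<in> V \<and> x j \<in> V)"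
proof (rule ccontr)
  assume sep: "\<nexists>i j. i < j \<and> (\<exists>V\<in>\<V>. x i \<in> V \<and> x j \<in> V)"
  have "inj x"
  proof (rule injI, rule ccontr)
    fix i j
    assume "x i = x j" "i \<noteq> j"
    moreover obtain V where "V \<in> \<V>" "x i \<in> V"
      using x \<V>(2) by blast
    ultimately show False
      using sep by (metis linorder_neq_iff)
  qed
  then obtain f :: "nat \<Rightarrow> nat" and p where f: "strict_mono f" and "p \<in> C"
    and lim: "limitin order_top (x \<circ> f) p sequentially"
    by (rule omega1_closed_inj_seq_convergent_subseq[OF om C _ x])
  then obtain V where V: "V \<in> \<V>" "p \<in> V"
    using \<V>(2) by blast
  then have "\<forall>\<^sub>F n in sequentially. (x \<circ> f) n \<in> V"
    using lim \<V>(1) unfolding limitin_def by blast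
  then obtain N where "\<forall>n\<ge>N. x (f n) \<in> V"
    unfolding eventually_sequentially by auto
  then have "x (f N) \<in> V" "x (f (Suc N)) \<in> V"
    by simp_all
  moreover have "f N < f (Suc N)"
    using f by (simp add: strict_mono_Suc_iff)
  ultimately show False
    using sep V(1) by blast
qed

lemma finite_star_cover_if_no_separated_seq:
  assumes "\<And>x :: nat \<Rightarrow> 'a. (\<forall>k. x k \<in> C) \<Longrightarrow> \<exists>i j. i < j \<and> (\<exists>V\<in>\<V>. x i \<in> V \<and> x j \<in> V)"
  shows "\<exists>F. finite F \<and> F \<subseteq> C \<and> C \<subseteq> St F \<V>"
proof (rule ccontr)
  assume H: "\<not> ?thesis"
  define next_pt where "next_pt F = (SOME z. z \<in> C \<and> z \<notin> St F \<V>)" for F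
  have next_pt: "next_pt F \<in> C \<and> next_pt F \<notin> St F \<V>" if "finite F" "F \<subseteq> C" for F
    unfolding next_pt_def by (rule someI_ex) (use H that in blast)
  define G where "G = rec_nat {} (\<lambda>_ F. insert (next_pt F) F)"
  have G_0: "G 0 = {}" and G_Suc: "G (Suc k) = insert (next_pt (G k)) (G k)" for k
    unfolding G_def by simp_all
  have G: "finite (G k) \<and> G k \<subseteq> C" for k
    by (induction k) (use next_pt in \<open>simp_all add: G_0 G_Suc\<close>)
  define x where "x k = next_pt (G k)" for k
  have x: "x k \<in> C \<and> x k \<notin> St (G k) \<V>" for k
    unfolding x_def using next_pt G by blast
  have earlier: "x i \<in> G j" if "i < j" for i j
    using that by (induction j) (auto simp: G_Suc x_def less_Suc_eq)
  have "\<not> (\<exists>V\<in>\<V>. x i \<in> V \<and> x j \<in> V)" if "i < j" for i j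
  proof
    assume "\<exists>V\<in>\<V>. x i \<in> V \<and> x j \<in> V"
    then have "x j \<in> St (G j) \<V>"
      using earlier[OF that] unfolding St_def by blast
    then show False
      using x by blast
  qed
  moreover have "\<forall>k. x k \<in> C"
    using x by blast
  ultimately show False
    using assms[of x] by blast
qed

lemma set_strongly_star_Hurewicz_if_closed_finite_star:
  assumes "\<And>C \<V>. closedin T C \<Longrightarrow> \<forall>V\<in>\<V>. openin T V \<Longrightarrow> C \<subseteq> \<Union>\<V> \<Longrightarrow>
      \<exists>F. finite F \<and> F \<subseteq> C \<and> C \<subseteq> St F \<V>"
  shows "set_strongly_star_Hurewicz T"
  unfolding set_strongly_star_Hurewicz_def
proof (intro allI impI)
  fix S and \<U> :: "nat \<Rightarrow> _"
  assume S: "S \<noteq> {} \<and> S \<subseteq> topspace T"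
    and \<U>: "\<forall>n. (\<forall>U\<in>\<U> n. openin T U) \<and> T closure_of S \<subseteq> \<Union>(\<U> n)"
  have "\<exists>F. finite F \<and> F \<subseteq> T closure_of S \<and> T closure_of S \<subseteq> St F (\<U> n)" for n
    using assms[OF closedin_closure_of, of "\<U> n" S] \<U> by blast
  then obtain F where F: "\<And>n. finite (F n) \<and> F n \<subseteq> T closure_of S \<and> T closure_of S \<subseteq> St (F n) (\<U> n)"
    by metis
  have "S \<subseteq> T closure_of S"
    using S by (simp add: closure_of_subset)
  then have "x \<in> St (F n) (\<U> n)" if "x \<in> S" for x n
    using F[of n] that by blast
  then have "\<forall>x\<in>S. \<forall>\<^sub>F n in sequentially. x \<in> St (F n) (\<U> n)"
    by (simp add: always_eventually)
  with F show "\<exists>F. (\<forall>n. finite (F n) \<and> F n \<subseteq> T closure_of S) \<and>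
      (\<forall>x\<in>S. \<forall>\<^sub>F n in sequentially. x \<in> St (F n) (\<U> n))"
    by blast
qed

lemma not_set_strongly_star_Hurewicz_if_uncountable_discrete:
  assumes "uncountable (topspace T)" and "\<And>y. y \<in> topspace T \<Longrightarrow> openin T {y}"
  shows "\<not> set_strongly_star_Hurewicz T"
proof
  let ?Y = "topspace T"
  define \<U> where "\<U> n = (\<lambda>y. {y}) ` ?Y" for n :: nat
  assume H: "set_strongly_star_Hurewicz T"
  have "?Y \<noteq> {} \<and> ?Y \<subseteq> ?Y"
    using assms(1) by auto
  moreover have "\<forall>n. (\<forall>U\<in>\<U> n. openin T U) \<and> T closure_of ?Y \<subseteq> \<Union>(\<U> n)"
    using assms(2) closure_of_subset_topspace[of T ?Y] by (auto simp: \<U>_def)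
  ultimately have "\<exists>F. (\<forall>n. finite (F n) \<and> F n \<subseteq> T closure_of ?Y) \<and>
      (\<forall>x\<in>?Y. \<forall>\<^sub>F n in sequentially. x \<in> St (F n) (\<U> n))"
    by (rule H[unfolded set_strongly_star_Hurewicz_def, THEN spec, THEN mp, THEN spec, THEN mp])
  then obtain F where F: "\<And>n. finite (F n)"
    and ev: "\<forall>x\<in>?Y. \<forall>\<^sub>F n in sequentially. x \<in> St (F n) (\<U> n)"
    by blast
  have "?Y \<subseteq> (\<Union>n. F n)"
  proof
    fix y
    assume "y \<in> ?Y"
    then have "\<forall>\<^sub>F n in sequentially. y \<in> St (F n) (\<U> n)"
      using ev by blast
    then obtain n where "y \<in> St (F n) (\<U> n)"
      using eventually_happens'[OF sequentially_bot] by blast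
    then show "y \<in> (\<Union>n. F n)"
      unfolding St_def \<U>_def by blast
  qed
  moreover have "countable (\<Union>n. F n)"
    using F by (simp add: countable_finite)
  ultimately show False
    using assms(1) countable_subset by blast
qed

lemma omega1_openin_order_top_osucc:
  assumes "is_omega1 TYPE('a::wellorder)"
  shows "openin order_top {osucc (a::'a)}"
proof -
  have "z = osucc a" if "a < z" "z < osucc (osucc a)" for z
  proof (rule antisym)
    show "osucc a \<le> z"
      using that(1) by (rule osucc_least)
    show "z \<le> osucc a"
      using osucc_least[of "osucc a" z] that(2) by (meson leD leI)
  qed
  then have "{a<..} \<inter> {..<osucc (osucc a)} = {osucc a}"
    using omega1_less_osucc[OF assms, of a] omega1_less_osucc[OF assms, of "osucc a"] by auto
  then show ?thesis
    by (metis openin_Int openin_order_top_greaterThan openin_order_top_lessThan)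
qed

lemma omega1_set_strongly_star_Hurewicz:
  assumes "is_omega1 TYPE('a::wellorder)"
  shows "set_strongly_star_Hurewicz (order_top :: 'a topology)"
proof (rule set_strongly_star_Hurewicz_if_closed_finite_star)
  fix C :: "'a set" and \<V>
  assume "closedin order_top C" "\<forall>V\<in>\<V>. openin order_top V" "C \<subseteq> \<Union>\<V>"
  then show "\<exists>F. finite F \<and> F \<subseteq> C \<and> C \<subseteq> St F \<V>"
    using omega1_closed_seq_shares_cover[OF assms] by (metis finite_star_cover_if_no_separated_seq)
qed

lemma omega1_uncountable_osucc_limits:
  assumes "is_omega1 TYPE('a::wellorder)"
  shows "uncountable {osucc a | a :: 'a. is_limit a}"
proof
  assume "countable {osucc a | a :: 'a. is_limit a}"
  then obtain b where b: "\<forall>y\<in>{osucc a | a :: 'a. is_limit a}. y < b"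
    using omega1_countable_bounded[OF assms] by blast
  obtain l where "is_limit l" "b < l"
    using omega1_limit_above[OF assms] by blast
  then have "osucc l < b"
    using b by blast
  moreover have "l < osucc l"
    by (rule omega1_less_osucc[OF assms])
  ultimately show False
    using \<open>b < l\<close> by simp
qed

theorem mainTheorem18:
  assumes "is_omega1 TYPE('a::wellorder)"
  shows "set_strongly_star_Hurewicz (order_top :: 'a topology)
     \<and> \<not> set_strongly_star_Hurewicz
           (subtopology (order_top :: 'a topology) {osucc a | a :: 'a. is_limit a})"
proof
  show "set_strongly_star_Hurewicz (order_top :: 'a topology)"
    using assms by (rule omega1_set_strongly_star_Hurewicz)
next
  let ?Y = "{osucc a | a :: 'a. is_limit a}"
  have topspace_Y: "topspace (subtopology order_top ?Y) = ?Y"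
    by (simp add: omega1_topspace_order_top[OF assms])
  have "openin (subtopology order_top ?Y) {y}" if "y \<in> topspace (subtopology order_top ?Y)" for y
  proof -
    have "y \<in> ?Y"
      using that topspace_Y by simp
    then obtain a where "y = osucc a"
      by blast
    then have "openin (subtopology order_top ?Y) ({y} \<inter> ?Y)"
      using omega1_openin_order_top_osucc[OF assms] by (simp add: openin_subtopology_Int)
    then show ?thesis
      using \<open>y \<in> ?Y\<close> by (simp add: Int_absorb2)
  qed
  moreover have "uncountable (topspace (subtopology order_top ?Y))"
    unfolding topspace_Y by (rule omega1_uncountable_osucc_limits[OF assms])
  ultimately show "\<not> set_strongly_star_Hurewicz (subtopology order_top ?Y)"
    by (intro not_set_strongly_star_Hurewicz_if_uncountable_discrete)
qed

end
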